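(* Let $\mathcal{X},\mathcal{Y},\mathcal{Z}$ be sets, $\mathcal{G}$ a measurable space of maps $g:\mathcal{X}\to\mathcal{Z}$, $\{h_\theta:\theta\in\mathbb{R}^p\}$ a parametric family of maps $\mathcal{Z}\to\mathbb{R}$, and $\mathcal{H}=\{h_\theta:\|\theta\|\le B\}$. Assume that for every $(x,y,g)$ the map $\theta\mapsto\ell(h_\theta\circ g(x),y)$ is convex, $L$-Lipschitz, and takes values in $[0,C]$. Fix arbitrary datasets $\mathcal{S}_t=((x_{t,1},y_{t,1}),\dots,(x_{t,m_t},y_{t,m_t}))$, $t=1,\dots,T$. Then the EWA-LL algorithm with prior $\pi_1$ and parameter $\eta>0$, using within task $t$ the online gradient algorithm (OGA) with step size $\zeta=\frac{B}{L\sqrt{2m_t}}$, satisfies $$\frac{1}{T}\sum_{t=1}^T \mathbb{E}_{\hat g_t\sim\pi_t}\Big[\frac{1}{m_t}\sum_{i=1}^{m_t}\hat\ell_{t,i}\Big]\le \inf_{\rho}\Bigg\{\mathbb{E}_{g\sim\rho}\Bigg[\frac{1}{T}\sum_{t=1}^T\inf_{h_t\in\mathcal{H}}\frac{1}{m_t}\sum_{i=1}^{m_t}\ell\big(h_t\circ g(x_{t,i}),y_{t,i}\big)+\frac{BL}{T}\sum_{t=1}^T\sqrt{\frac{2}{m_t}}\Bigg]+\frac{\eta C^2}{8}+\frac{\mathcal{K}(\rho,\pi_1)}{\eta T}\Bigg\},$$ the infimum being over all probability measures $\rho$ on $\mathcal{G}$, with $\mathcal{K}$ the Kullback–Leibler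 divergence.
   Context: OGA within task $t$ for representation $g$: $\theta_1=0$; for $i=1,\dots,m_t$, predict $\hat y^g_{t,i}=h_{\theta_i}\circ g(x_{t,i})$, then after $y_{t,i}$ is revealed set $\theta_{i+1}=\theta_i-\zeta\nabla_\theta\ell(h_\theta\circ g(x_{t,i}),y_{t,i})|_{\theta=\theta_i}$, where $\nabla_\theta$ denotes a subgradient. Let $\hat L_t(g)=\frac{1}{m_t}\sum_i\ell(\hat y^g_{t,i},y_{t,i})$. EWA-LL: given a prior probability measure $\pi_1$ on $\mathcal{G}$ and $\eta>0$, for $t=1,\dots,T$: draw $\hat g_t\sim\pi_t$; run OGA on $\mathcal{S}_t$ with representation $\hat g_t$, incurring losses $\hat\ell_{t,i}=\ell(\hat y^{\hat g_t}_{t,i},y_{t,i})$; set $\pi_{t+1}(\mathrm{d}g)\propto\exp(-\eta\hat L_t(g))\pi_t(\mathrm{d}g)$ (normalized to a probability measure). $\mathbb{E}_{\hat g_t\sim\pi_t}$ is the expectation over the random draw of $\hat g_t$. *)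

theory Defs
  imports "HOL-Probability.Probability" "HOL-Analysis.Analysis"
begin

text \<open>Online gradient iterates. oga_iter z G k is theta_(k+1): theta_1 = 0 and
  theta_(i+1) = theta_i - z * G i theta_i, where G i theta is the chosen subgradient
  at theta of the loss on the i-th example.\<close>
primrec oga_iter :: "real \<Rightarrow> (nat \<Rightarrow> real^'p \<Rightarrow> real^'p) \<Rightarrow> nat \<Rightarrow> real^'p" where
  "oga_iter z G 0 = 0"
| "oga_iter z G (Suc k) = oga_iter z G k - z *\<^sub>R G (Suc k) (oga_iter z G k)"

text \<open>Average loss (1/m) sum_i loss(h_(theta_i)(g x_i), y_i) of OGA run with
  representation g and step size z on data D 1, ..., D m.
  sgr g x y theta is a subgradient of theta |-> loss (h theta (g x)) y.\<close>
definition oga_avg_loss ::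
  "(real \<Rightarrow> 'y \<Rightarrow> real) \<Rightarrow> (real^'p \<Rightarrow> 'z \<Rightarrow> real) \<Rightarrow>
   (('x \<Rightarrow> 'z) \<Rightarrow> 'x \<Rightarrow> 'y \<Rightarrow> real^'p \<Rightarrow> real^'p) \<Rightarrow> real \<Rightarrow>
   ('x \<Rightarrow> 'z) \<Rightarrow> (nat \<Rightarrow> 'x \<times> 'y) \<Rightarrow> nat \<Rightarrow> real" where
  "oga_avg_loss loss h sgr z g D m =
     (1 / real m) * (\<Sum>i=1..m.
        loss (h (oga_iter z (\<lambda>j th. sgr g (fst (D j)) (snd (D j)) th) (i - 1)) (g (fst (D i))))
             (snd (D i)))"

definition task_loss ::
  "(real \<Rightarrow> 'y \<Rightarrow> real) \<Rightarrow> (real^'p \<Rightarrow> 'z \<Rightarrow> real) \<Rightarrow>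
   (('x \<Rightarrow> 'z) \<Rightarrow> 'x \<Rightarrow> 'y \<Rightarrow> real^'p \<Rightarrow> real^'p) \<Rightarrow> real \<Rightarrow> real \<Rightarrow>
   (nat \<Rightarrow> nat \<Rightarrow> 'x \<times> 'y) \<Rightarrow> (nat \<Rightarrow> nat) \<Rightarrow> nat \<Rightarrow> ('x \<Rightarrow> 'z) \<Rightarrow> real" where
  "task_loss loss h sgr B L S m t g =
     oga_avg_loss loss h sgr (B / (L * sqrt (2 * real (m t)))) g (S t) (m t)"

definition ewa_update :: "'a measure \<Rightarrow> real \<Rightarrow> ('a \<Rightarrow> real) \<Rightarrow> 'a measure" where
  "ewa_update mu eta Lh =
     density mu (\<lambda>g. ennreal (exp (- eta * Lh g) / (\<integral>g'. exp (- eta * Lh g') \<partial>mu)))"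

text \<open>ewa_seq pi1 eta Lh k is pi_(k+1); Lh t is Lhat_t.\<close>
primrec ewa_seq :: "'a measure \<Rightarrow> real \<Rightarrow> (nat \<Rightarrow> 'a \<Rightarrow> real) \<Rightarrow> nat \<Rightarrow> 'a measure" where
  "ewa_seq pi1 eta Lh 0 = pi1"
| "ewa_seq pi1 eta Lh (Suc k) = ewa_update (ewa_seq pi1 eta Lh k) eta (Lh (Suc k))"

definition kl_div :: "'a measure \<Rightarrow> 'a measure \<Rightarrow> ereal" where
  "kl_div rho mu =
     (if absolutely_continuous mu rho \<and> integrable rho (entropy_density (exp 1) mu rho)
      then ereal (KL_divergence (exp 1) mu rho) else \<infinity>)"

end

theory Submission
  imports Defs
begin

text \<open>Within task t, online gradient descent with step size B / (L sqrt(2 m)) has regret at most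
  B L sqrt(2 m) against every parameter in the ball of radius B (telescoping of the squared
  distances to the comparator), so Lhat_t(g) exceeds the best in-class average loss by at most
  B L sqrt(2 / m_t). Across tasks, EWA is analysed through the total weight
  W_T = \<integral> exp (- eta \<Sum>_t Lhat_t) d pi_1: pi_t is the Gibbs measure with density proportional to
  exp (- eta \<Sum>_(s<t) Lhat_s), so Hoeffding's lemma gives
  W_t / W_(t-1) \<le> exp (- eta E_(pi_t) Lhat_t + eta^2 C^2 / 8), while the Donsker-Varadhan
  variational inequality gives W_T \<ge> exp (- eta \<integral> \<Sum>_t Lhat_t d rho - K(rho, pi_1)) for every rho.\<close>

lemma subgradient_norm_le_lipschitz:
  fixes f :: "'a::real_inner \<Rightarrow> real"
  assumes lip: "L-lipschitz_on UNIV f" and sub: "\<And>y. f y \<ge> f x + inner v (y - x)"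
  shows "norm v \<le> L"
proof -
  have "f x + (norm v)\<^sup>2 \<le> f (x + v)"
    using sub[of "x + v"] by (simp add: power2_norm_eq_inner)
  also have "\<dots> \<le> f x + L * norm v"
    using lipschitz_onD[OF lip, of "x + v" x] by (simp add: dist_norm dist_real_def)
  finally have "norm v * norm v \<le> L * norm v" by (simp add: power2_eq_square)
  then show ?thesis
    by (cases "norm v = 0") (use lipschitz_on_nonneg[OF lip] in auto)
qed

lemma norm_diff_scaleR_power2:
  fixes w v :: "'a::real_inner"
  shows "(norm (w - z *\<^sub>R v))\<^sup>2 = (norm w)\<^sup>2 - 2 * z * inner v w + z\<^sup>2 * (norm v)\<^sup>2"
  unfolding power2_norm_eq_inner
  by (simp only: inner_diff_left inner_diff_right inner_scaleR_left inner_scaleR_right)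
     (simp add: inner_commute algebra_simps power2_eq_square)

lemma oga_regret:
  fixes l :: "nat \<Rightarrow> real^'p \<Rightarrow> real" and G :: "nat \<Rightarrow> real^'p \<Rightarrow> real^'p"
  assumes sub: "\<And>i th th'. l i th' \<ge> l i th + inner (G i th) (th' - th)"
    and G_bounded: "\<And>i th. norm (G i th) \<le> L" and z: "z > 0"
  shows "(\<Sum>i=1..k. l i (oga_iter z G (i - 1)) - l i u)
           \<le> ((norm u)\<^sup>2 - (norm (oga_iter z G k - u))\<^sup>2) / (2 * z) + z * k * L\<^sup>2 / 2"
proof (induction k)
  case 0
  then show ?case by simp
next
  case (Suc k)
  define w where "w = oga_iter z G k - u"
  define v where "v = G (Suc k) (oga_iter z G k)"
  have step: "oga_iter z G (Suc k) - u = w - z *\<^sub>R v"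
    by (simp add: w_def v_def algebra_simps)
  have "l (Suc k) (oga_iter z G k) - l (Suc k) u \<le> inner v w"
    using sub[of "Suc k" "oga_iter z G k" u] by (simp add: v_def w_def inner_diff_right)
  also have "\<dots> = ((norm w)\<^sup>2 - (norm (w - z *\<^sub>R v))\<^sup>2) / (2 * z) + z * (norm v)\<^sup>2 / 2"
    using z norm_diff_scaleR_power2[of w z v] by (simp add: field_simps power2_eq_square)
  also have "\<dots> \<le> ((norm w)\<^sup>2 - (norm (w - z *\<^sub>R v))\<^sup>2) / (2 * z) + z * L\<^sup>2 / 2"
    using G_bounded[of "Suc k" "oga_iter z G k"] z by (simp add: v_def power_mono)
  finally have last: "l (Suc k) (oga_iter z G k) - l (Suc k) u
      \<le> ((norm w)\<^sup>2 - (norm (w - z *\<^sub>R v))\<^sup>2) / (2 * z) + z * L\<^sup>2 / 2" .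
  have "(\<Sum>i=1..Suc k. l i (oga_iter z G (i - 1)) - l i u)
      = (\<Sum>i=1..k. l i (oga_iter z G (i - 1)) - l i u) + (l (Suc k) (oga_iter z G k) - l (Suc k) u)"
    by simp
  also have "\<dots> \<le> ((norm u)\<^sup>2 - (norm w)\<^sup>2) / (2 * z) + z * k * L\<^sup>2 / 2
       + (((norm w)\<^sup>2 - (norm (w - z *\<^sub>R v))\<^sup>2) / (2 * z) + z * L\<^sup>2 / 2)"
    using Suc last unfolding w_def by linarith
  also have "\<dots> = ((norm u)\<^sup>2 - (norm (oga_iter z G (Suc k) - u))\<^sup>2) / (2 * z) + z * Suc k * L\<^sup>2 / 2"
    unfolding step using z by (simp add: field_simps)
  finally show ?case .
qed

lemma average_atLeastAtMost:
  assumes "n > 0" and "\<And>i. i \<in> {1..n} \<Longrightarrow> f i \<in> {0..C}"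
  shows "(1 / real n) * (\<Sum>i=1..n. f i) \<in> {0..C}"
proof -
  have "0 \<le> (\<Sum>i=1..n. f i)" using assms(2) by (intro sum_nonneg) auto
  moreover have "(\<Sum>i=1..n. f i) \<le> (\<Sum>i=1..n. C)" using assms(2) by (intro sum_mono) auto
  ultimately show ?thesis using assms(1) by (auto simp: field_simps)
qed

lemma INF_atLeastAtMost:
  fixes f :: "'a \<Rightarrow> real"
  assumes "A \<noteq> {}" and "\<And>x. x \<in> A \<Longrightarrow> f x \<in> {a..b}"
  shows "(INF x\<in>A. f x) \<in> {a..b}"
proof -
  obtain x where "x \<in> A" using assms(1) by blast
  have "bdd_below (f ` A)" using assms(2) by (intro bdd_belowI[of _ a]) auto
  then have "(INF x\<in>A. f x) \<le> b" using assms(2) \<open>x \<in> A\<close> by (intro cINF_lower2[of _ _ x]) auto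
  moreover have "a \<le> (INF x\<in>A. f x)" using assms by (intro cINF_greatest) auto
  ultimately show ?thesis by simp
qed

lemma oga_avg_loss_le:
  fixes u :: "real^'p"
  assumes n: "n > 0" and B: "B > 0" and L: "L > 0"
    and sub: "\<forall>x y th th'. loss (h th' (g x)) y \<ge> loss (h th (g x)) y + inner (sgr g x y th) (th' - th)"
    and lip: "\<forall>x y. L-lipschitz_on UNIV (\<lambda>th. loss (h th (g x)) y)"
    and u: "norm u \<le> B"
  shows "oga_avg_loss loss h sgr (B / (L * sqrt (2 * real n))) g D n
           \<le> (1 / real n) * (\<Sum>i=1..n. loss (h u (g (fst (D i)))) (snd (D i))) + B * L * sqrt (2 / real n)"
proof -
  define s where "s = sqrt (2 * real n)"
  have s: "s > 0" "s\<^sup>2 = 2 * real n" using n by (auto simp: s_def)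
  define z where "z = B / (L * s)"
  have z: "z > 0" using B L s by (simp add: z_def)
  define l where "l = (\<lambda>i th. loss (h th (g (fst (D i)))) (snd (D i)))"
  define G where "G = (\<lambda>i th. sgr g (fst (D i)) (snd (D i)) th)"
  have sub_l: "\<And>i th th'. l i th' \<ge> l i th + inner (G i th) (th' - th)"
    using sub by (simp add: l_def G_def)
  have G_bounded: "\<And>i th. norm (G i th) \<le> L"
    unfolding G_def using lip sub by (blast intro: subgradient_norm_le_lipschitz)
  have "(\<Sum>i=1..n. l i (oga_iter z G (i - 1)) - l i u)
          \<le> ((norm u)\<^sup>2 - (norm (oga_iter z G n - u))\<^sup>2) / (2 * z) + z * n * L\<^sup>2 / 2"
    by (rule oga_regret[OF sub_l G_bounded z])
  also have "\<dots> \<le> B\<^sup>2 / (2 * z) + z * n * L\<^sup>2 / 2"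
  proof -
    have "(norm u)\<^sup>2 \<le> B\<^sup>2" using u by (simp add: power_mono)
    then have "(norm u)\<^sup>2 - (norm (oga_iter z G n - u))\<^sup>2 \<le> B\<^sup>2"
      by (smt (verit) zero_le_power2)
    then show ?thesis using z by (auto intro!: divide_right_mono)
  qed
  also have "\<dots> = B * L * s / 2 + B * L * s / 4"
    using s B L unfolding z_def by (simp add: field_simps power2_eq_square)
  also have "\<dots> \<le> B * L * s" using B L s by simp
  finally have "(\<Sum>i=1..n. l i (oga_iter z G (i - 1))) \<le> (\<Sum>i=1..n. l i u) + B * L * s"
    by (simp add: sum_subtractf)
  then have "(1 / real n) * (\<Sum>i=1..n. l i (oga_iter z G (i - 1)))
               \<le> (1 / real n) * (\<Sum>i=1..n. l i u) + B * L * (s / real n)"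
    using n by (simp add: field_simps)
  moreover have "s / real n = sqrt (2 / real n)"
    using n s by (intro real_sqrt_unique[symmetric]) (auto simp: power_divide power2_eq_square)
  ultimately show ?thesis
    unfolding oga_avg_loss_def l_def G_def z_def s_def by simp
qed

lemma oga_avg_loss_le_INF_cball:
  assumes n: "n > 0" and B: "B > 0" and L: "L > 0"
    and sub: "\<forall>x y th th'. loss (h th' (g x)) y \<ge> loss (h th (g x)) y + inner (sgr g x y th) (th' - th)"
    and lip: "\<forall>x y. L-lipschitz_on UNIV (\<lambda>th. loss (h th (g x)) y)"
  shows "oga_avg_loss loss h sgr (B / (L * sqrt (2 * real n))) g D n
           \<le> (INF u\<in>cball (0 :: real^'p) B. (1 / real n) * (\<Sum>i=1..n. loss (h u (g (fst (D i)))) (snd (D i))))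
             + B * L * sqrt (2 / real n)"
proof -
  have "oga_avg_loss loss h sgr (B / (L * sqrt (2 * real n))) g D n - B * L * sqrt (2 / real n)
          \<le> (INF u\<in>cball (0 :: real^'p) B. (1 / real n) * (\<Sum>i=1..n. loss (h u (g (fst (D i)))) (snd (D i))))"
  proof (rule cINF_greatest)
    fix u :: "real^'p" assume "u \<in> cball 0 B"
    then show "oga_avg_loss loss h sgr (B / (L * sqrt (2 * real n))) g D n - B * L * sqrt (2 / real n)
                 \<le> (1 / real n) * (\<Sum>i=1..n. loss (h u (g (fst (D i)))) (snd (D i)))"
      using oga_avg_loss_le[where loss = loss and h = h and g = g and sgr = sgr, OF n B L sub lip, of u D] by simp
  qed (use B in simp)
  then show ?thesis by simp
qed

text \<open>The infimum over the uncountable ball equals, by continuity, the infimum over a countable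
  dense subset of the open ball.\<close>

lemma borel_measurable_INF_cball:
  fixes \<Phi> :: "'a::{real_normed_vector, second_countable_topology} \<Rightarrow> 'b \<Rightarrow> real"
  assumes meas: "\<And>u. \<Phi> u \<in> borel_measurable M"
    and cont: "\<And>g. g \<in> space M \<Longrightarrow> continuous_on UNIV (\<lambda>u. \<Phi> u g)"
    and bdd: "\<And>g. g \<in> space M \<Longrightarrow> bdd_below ((\<lambda>u. \<Phi> u g) ` cball 0 B)"
    and B: "B > 0"
  shows "(\<lambda>g. INF u\<in>cball 0 B. \<Phi> u g) \<in> borel_measurable M"
proof -
  obtain D :: "'a set" where D: "countable D" "\<And>X. open X \<Longrightarrow> X \<noteq> {} \<Longrightarrow> \<exists>d\<in>D. d \<in> X"
    using countable_dense_setE by blast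
  define D' where "D' = D \<inter> ball 0 B"
  have "D' \<noteq> {}" using D(2)[of "ball 0 B"] B unfolding D'_def by auto
  have INF_eq: "(INF u\<in>cball 0 B. \<Phi> u g) = (INF u\<in>D'. \<Phi> u g)" if g: "g \<in> space M" for g
  proof (rule antisym)
    have bdd_D': "bdd_below ((\<lambda>u. \<Phi> u g) ` D')"
      using bdd[OF g] by (rule bdd_below_mono) (auto simp: D'_def)
    show "(INF u\<in>cball 0 B. \<Phi> u g) \<le> (INF u\<in>D'. \<Phi> u g)"
      by (rule cINF_superset_mono[OF \<open>D' \<noteq> {}\<close> bdd[OF g]]) (auto simp: D'_def)
    show "(INF u\<in>D'. \<Phi> u g) \<le> (INF u\<in>cball 0 B. \<Phi> u g)"
    proof (rule cINF_greatest)
      show "cball 0 B \<noteq> {}" using B by simp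
    next
      fix u :: 'a assume u: "u \<in> cball 0 B"
      show "(INF u\<in>D'. \<Phi> u g) \<le> \<Phi> u g"
      proof (rule field_le_epsilon)
        fix e :: real assume "e > 0"
        then obtain \<delta> where "\<delta> > 0" and \<delta>: "\<And>u'. dist u' u < \<delta> \<Longrightarrow> dist (\<Phi> u' g) (\<Phi> u g) < e"
          using cont[OF g] unfolding continuous_on_iff by blast
        have "u \<in> closure (ball 0 B)" using u B by simp
        then obtain y where "y \<in> ball 0 B" "dist y u < \<delta>"
          using \<open>\<delta> > 0\<close> closure_approachable by blast
        then have "ball u \<delta> \<inter> ball 0 B \<noteq> {}" by (auto simp: dist_commute)
        then obtain d where d: "d \<in> D" "d \<in> ball u \<delta> \<inter> ball 0 B"
          using D(2)[of "ball u \<delta> \<inter> ball 0 B"] by blast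
        have "(INF u\<in>D'. \<Phi> u g) \<le> \<Phi> d g"
          using bdd_D' d by (auto simp: D'_def intro: cINF_lower)
        also have "\<dots> \<le> \<Phi> u g + e"
          using \<delta>[of d] d by (auto simp: dist_real_def dist_commute)
        finally show "(INF u\<in>D'. \<Phi> u g) \<le> \<Phi> u g + e" .
      qed
    qed
  qed
  have "(\<lambda>g. INF u\<in>D'. \<Phi> u g) \<in> borel_measurable M"
    using D(1) meas by (auto simp: D'_def intro!: borel_measurable_cINF_real)
  then show ?thesis
    by (rule measurable_cong[THEN iffD1, rotated]) (simp add: INF_eq)
qed

lemma (in prob_space) integral_exp_le_Hoeffding:
  fixes X :: "'a \<Rightarrow> real"
  assumes X: "X \<in> borel_measurable M" and X_bounds: "\<And>x. x \<in> space M \<Longrightarrow> X x \<in> {0..C}"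
    and l: "l > 0"
  shows "(\<integral>x. exp (- l * X x) \<partial>M) \<le> exp (- l * expectation X + l\<^sup>2 * C\<^sup>2 / 8)"
proof -
  interpret interval_bounded_random_variable M "\<lambda>x. - X x" "- C" 0
    by unfold_locales (use X X_bounds in \<open>auto intro!: AE_I2\<close>)
  have "integrable M (\<lambda>x. exp (l * (expectation X - X x)))"
    by (rule integrable_const_bound[where B = "exp (l * expectation X)"])
       (use X X_bounds l in \<open>auto intro!: AE_I2 simp: algebra_simps\<close>)
  then have "ennreal (\<integral>x. exp (l * (expectation X - X x)) \<partial>M)
               = (\<integral>\<^sup>+ x. exp (l * (expectation X - X x)) \<partial>M)"
    by (intro nn_integral_eq_integral[symmetric]) auto
  also have "\<dots> \<le> ennreal (exp (l\<^sup>2 * C\<^sup>2 / 8))"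
    using Hoeffdings_lemma_nn_integral[OF l] by (simp add: algebra_simps)
  finally have centred: "(\<integral>x. exp (l * (expectation X - X x)) \<partial>M) \<le> exp (l\<^sup>2 * C\<^sup>2 / 8)"
    by simp
  have "(\<integral>x. exp (- l * X x) \<partial>M) = (\<integral>x. exp (- l * expectation X) * exp (l * (expectation X - X x)) \<partial>M)"
    by (simp add: exp_add[symmetric] algebra_simps)
  also have "\<dots> = exp (- l * expectation X) * (\<integral>x. exp (l * (expectation X - X x)) \<partial>M)"
    by simp
  also have "\<dots> \<le> exp (- l * expectation X) * exp (l\<^sup>2 * C\<^sup>2 / 8)"
    using centred by simp
  also have "\<dots> = exp (- l * expectation X + l\<^sup>2 * C\<^sup>2 / 8)"
    by (simp only: exp_add)
  finally show ?thesis .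
qed

lemma (in prob_space) exp_expectation_le:
  fixes X :: "'a \<Rightarrow> real"
  assumes int_X: "integrable M X" and int_exp: "integrable M (\<lambda>x. exp (X x))"
  shows "exp (expectation X) \<le> expectation (\<lambda>x. exp (X x))"
proof -
  define a where "a = expectation X"
  have "expectation (\<lambda>x. exp a * (1 + X x - a)) = exp a * (1 + a - a)"
    using int_X by (simp add: a_def prob_space)
  then have "exp a = expectation (\<lambda>x. exp a * (1 + X x - a))" by simp
  also have "\<dots> \<le> expectation (\<lambda>x. exp (X x))"
  proof (rule integral_mono)
    fix x
    have "exp a * (1 + X x - a) \<le> exp a * exp (X x - a)"
      using exp_ge_add_one_self[of "X x - a"] by (intro mult_left_mono) (simp_all add: algebra_simps)
    then show "exp a * (1 + X x - a) \<le> exp (X x)" by (simp add: exp_diff)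
  qed (use int_X int_exp in simp_all)
  finally show ?thesis by (simp add: a_def)
qed

lemma integral_divide_RN_deriv_le:
  fixes f :: "'a \<Rightarrow> real"
  assumes \<pi>: "sigma_finite_measure \<pi>" and sets_eq: "sets \<rho> = sets \<pi>"
    and ac: "absolutely_continuous \<pi> \<rho>"
    and f_meas: "f \<in> borel_measurable \<pi>" and f_nonneg: "\<And>x. 0 \<le> f x" and int_f: "integrable \<pi> f"
  shows "integrable \<rho> (\<lambda>x. f x / enn2real (RN_deriv \<pi> \<rho> x))"
    and "(\<integral>x. f x / enn2real (RN_deriv \<pi> \<rho> x) \<partial>\<rho>) \<le> (\<integral>x. f x \<partial>\<pi>)"
proof -
  interpret \<pi>: sigma_finite_measure \<pi> by (rule \<pi>)
  define p where "p = RN_deriv \<pi> \<rho>"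
  have density_p: "density \<pi> p = \<rho>" unfolding p_def by (rule \<pi>.density_RN_deriv[OF ac sets_eq])
  define Y where "Y x = f x / enn2real (p x)" for x
  have Y_meas: "Y \<in> borel_measurable \<pi>" unfolding Y_def p_def using f_meas by measurable
  have Y_nonneg: "0 \<le> Y x" for x by (simp add: Y_def f_nonneg)
  have p_Y: "p x * ennreal (Y x) \<le> ennreal (f x)" for x
  proof (cases "p x")
    case (real q)
    then show ?thesis
      by (cases "q = 0") (simp_all add: Y_def f_nonneg flip: ennreal_mult)
  qed (simp add: Y_def)
  have "(\<integral>\<^sup>+ x. Y x \<partial>\<rho>) = (\<integral>\<^sup>+ x. p x * ennreal (Y x) \<partial>\<pi>)"
    unfolding density_p[symmetric] by (rule nn_integral_density) (use Y_meas p_def in simp_all)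
  also have "\<dots> \<le> (\<integral>\<^sup>+ x. f x \<partial>\<pi>)"
    by (rule nn_integral_mono) (rule p_Y)
  also have "\<dots> = ennreal (\<integral>x. f x \<partial>\<pi>)"
    by (rule nn_integral_eq_integral) (use int_f f_nonneg in auto)
  finally have nn_Y: "(\<integral>\<^sup>+ x. Y x \<partial>\<rho>) \<le> ennreal (\<integral>x. f x \<partial>\<pi>)" .
  have int_Y: "integrable \<rho> Y"
  proof (rule integrableI_nonneg)
    show "Y \<in> borel_measurable \<rho>" using Y_meas sets_eq by (simp cong: measurable_cong_sets)
    show "(\<integral>\<^sup>+ x. Y x \<partial>\<rho>) < \<infinity>" using nn_Y by (simp add: le_less_trans)
  qed (simp add: Y_nonneg)
  then show "integrable \<rho> (\<lambda>x. f x / enn2real (RN_deriv \<pi> \<rho> x))" by (simp add: Y_def[abs_def] p_def)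
  have "ennreal (\<integral>x. Y x \<partial>\<rho>) = (\<integral>\<^sup>+ x. Y x \<partial>\<rho>)"
    by (rule nn_integral_eq_integral[symmetric]) (use int_Y Y_nonneg in auto)
  with nn_Y have "ennreal (\<integral>x. Y x \<partial>\<rho>) \<le> ennreal (\<integral>x. f x \<partial>\<pi>)" by simp
  then show "(\<integral>x. f x / enn2real (RN_deriv \<pi> \<rho> x) \<partial>\<rho>) \<le> (\<integral>x. f x \<partial>\<pi>)"
    unfolding Y_def p_def by (rule ennreal_le_iff[THEN iffD1, rotated]) (simp add: f_nonneg)
qed

lemma Donsker_Varadhan_inequality:
  fixes \<phi> :: "'a \<Rightarrow> real"
  assumes \<pi>: "sigma_finite_measure \<pi>" and \<rho>: "prob_space \<rho>" and sets_eq: "sets \<rho> = sets \<pi>"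
    and ac: "absolutely_continuous \<pi> \<rho>"
    and int_entropy: "integrable \<rho> (entropy_density (exp 1) \<pi> \<rho>)"
    and \<phi>_meas: "\<phi> \<in> borel_measurable \<pi>" and int_\<phi>: "integrable \<rho> \<phi>"
    and int_exp: "integrable \<pi> (\<lambda>x. exp (\<phi> x))"
  shows "exp ((\<integral>x. \<phi> x \<partial>\<rho>) - KL_divergence (exp 1) \<pi> \<rho>) \<le> (\<integral>x. exp (\<phi> x) \<partial>\<pi>)"
proof -
  interpret \<pi>: sigma_finite_measure \<pi> by (rule \<pi>)
  interpret \<rho>: prob_space \<rho> by (rule \<rho>)
  define p where "p = RN_deriv \<pi> \<rho>"
  define r where "r x = enn2real (p x)" for x
  have density_p: "density \<pi> p = \<rho>" unfolding p_def by (rule \<pi>.density_RN_deriv[OF ac sets_eq])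
  have "AE x in \<pi>. p x \<noteq> \<infinity>" unfolding p_def
    by (rule \<pi>.RN_deriv_finite[OF prob_space_imp_sigma_finite[OF \<rho>] ac sets_eq])
  then have "AE x in \<rho>. 0 < p x \<and> p x \<noteq> \<infinity>"
    unfolding density_p[symmetric] by (subst AE_density) (auto simp: p_def elim!: eventually_mono)
  then have r_pos: "AE x in \<rho>. 0 < r x"
    by (auto simp: r_def enn2real_positive_iff top.not_eq_extremum elim!: eventually_mono)
  have KL_eq: "KL_divergence (exp 1) \<pi> \<rho> = (\<integral>x. ln (r x) \<partial>\<rho>)"
    and int_ln: "integrable \<rho> (\<lambda>x. ln (r x))"
    using int_entropy by (simp_all add: KL_divergence_def entropy_density_def r_def p_def log_def comp_def)
  \<comment> \<open>Jensen for exp, applied to \<phi> - ln (d\<rho>/d\<pi>), whose \<rho>-mean is the exponent on the left.\<close>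
  define X where "X x = \<phi> x - ln (r x)" for x
  have int_X: "integrable \<rho> X" unfolding X_def using int_\<phi> int_ln by simp
  have exp_X: "AE x in \<rho>. exp (X x) = exp (\<phi> x) / r x"
    using r_pos by (auto simp: X_def exp_diff elim!: eventually_mono)
  have meas_\<rho>: "f \<in> borel_measurable \<pi> \<Longrightarrow> f \<in> borel_measurable \<rho>" for f :: "'a \<Rightarrow> real"
    using sets_eq by (simp cong: measurable_cong_sets)
  have r_meas: "r \<in> borel_measurable \<pi>" unfolding r_def p_def by measurable
  have X_meas: "X \<in> borel_measurable \<rho>" unfolding X_def using meas_\<rho>[OF \<phi>_meas] meas_\<rho>[OF r_meas] by measurable
  have "(\<lambda>x. exp (\<phi> x)) \<in> borel_measurable \<pi>" using \<phi>_meas by measurable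
  note change = integral_divide_RN_deriv_le[OF \<pi> sets_eq ac this exp_ge_zero int_exp, folded p_def, folded r_def]
  have int_exp_X: "integrable \<rho> (\<lambda>x. exp (X x))"
    using change(1) X_meas meas_\<rho>[OF \<phi>_meas] meas_\<rho>[OF r_meas]
    by (subst integrable_cong_AE[OF _ _ exp_X]) simp_all
  have "exp (\<integral>x. X x \<partial>\<rho>) \<le> (\<integral>x. exp (X x) \<partial>\<rho>)"
    by (rule \<rho>.exp_expectation_le[OF int_X int_exp_X])
  also have "\<dots> = (\<integral>x. exp (\<phi> x) / r x \<partial>\<rho>)"
    by (rule integral_cong_AE) (use X_meas meas_\<rho>[OF \<phi>_meas] meas_\<rho>[OF r_meas] exp_X in simp_all)
  also have "\<dots> \<le> (\<integral>x. exp (\<phi> x) \<partial>\<pi>)"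
    by (rule change(2))
  finally show ?thesis
    using int_\<phi> int_ln by (simp add: X_def KL_eq)
qed

locale ewa_losses =
  fixes pi1 :: "'a measure" and eta C :: real and T :: nat and Lh :: "nat \<Rightarrow> 'a \<Rightarrow> real"
  assumes prob_space_prior: "prob_space pi1" and eta_pos: "eta > 0"
    and measurable_loss: "\<And>t. t \<in> {1..T} \<Longrightarrow> Lh t \<in> borel_measurable pi1"
    and loss_bounds: "\<And>t g. t \<in> {1..T} \<Longrightarrow> g \<in> space pi1 \<Longrightarrow> Lh t g \<in> {0..C}"
begin

interpretation prior: prob_space pi1 by (rule prob_space_prior)

definition weight :: "nat \<Rightarrow> 'a \<Rightarrow> real" where
  "weight k g = exp (- eta * (\<Sum>t=1..k. Lh t g))"

definition total_weight :: "nat \<Rightarrow> real" where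
  "total_weight k = (\<integral>g. weight k g \<partial>pi1)"

definition gibbs :: "nat \<Rightarrow> 'a measure" where
  "gibbs k = density pi1 (\<lambda>g. ennreal (weight k g / total_weight k))"

definition expected_loss :: "nat \<Rightarrow> real" where
  "expected_loss t = (\<integral>g. Lh t g \<partial>ewa_seq pi1 eta Lh (t - 1))"

lemma cumulative_loss_bounds:
  "k \<le> T \<Longrightarrow> g \<in> space pi1 \<Longrightarrow> (\<Sum>t=1..k. Lh t g) \<in> {0..k * C}"
  using sum_nonneg[of "{1..k}" "\<lambda>t. Lh t g"] sum_mono[of "{1..k}" "\<lambda>t. Lh t g" "\<lambda>_. C"]
    loss_bounds by auto

lemma measurable_cumulative_loss [measurable]:
  "k \<le> T \<Longrightarrow> (\<lambda>g. \<Sum>t=1..k. Lh t g) \<in> borel_measurable pi1"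
  using measurable_loss by (intro borel_measurable_sum) auto

lemma weight_pos: "0 < weight k g"
  by (simp add: weight_def)

lemma weight_0: "weight 0 g = 1"
  by (simp add: weight_def)

lemma weight_Suc: "weight (Suc k) g = weight k g * exp (- eta * Lh (Suc k) g)"
  by (simp add: weight_def exp_add[symmetric] algebra_simps)

lemma measurable_weight [measurable]: "k \<le> T \<Longrightarrow> weight k \<in> borel_measurable pi1"
  unfolding weight_def by measurable

lemma weight_bounds:
  assumes "k \<le> T" "g \<in> space pi1"
  shows "weight k g \<in> {exp (- eta * (k * C))..1}"
  using cumulative_loss_bounds[OF assms] eta_pos by (auto simp: weight_def mult_left_mono)

lemma integrable_weight: "k \<le> T \<Longrightarrow> integrable pi1 (weight k)"
  using weight_bounds weight_pos
  by (intro prior.integrable_const_bound[where B = 1]) (auto simp: less_imp_le)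

lemma total_weight_pos: "k \<le> T \<Longrightarrow> 0 < total_weight k"
proof -
  assume k: "k \<le> T"
  have "0 < exp (- eta * (k * C))" by simp
  also have "\<dots> = (\<integral>g. exp (- eta * (k * C)) \<partial>pi1)" by (simp add: prior.prob_space)
  also have "\<dots> \<le> total_weight k" unfolding total_weight_def
    using integrable_weight[OF k] weight_bounds[OF k] by (intro integral_mono) auto
  finally show ?thesis .
qed

lemma total_weight_0: "total_weight 0 = 1"
  unfolding total_weight_def weight_0[abs_def] using prior.prob_space by simp

lemma prob_space_gibbs: "k \<le> T \<Longrightarrow> prob_space (gibbs k)"
proof (rule prob_spaceI)
  assume k: "k \<le> T"
  have "emeasure (gibbs k) (space (gibbs k))
          = (\<integral>\<^sup>+ g. ennreal (weight k g / total_weight k) * indicator (space pi1) g \<partial>pi1)"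
    unfolding gibbs_def using k by (subst emeasure_density) auto
  also have "\<dots> = (\<integral>\<^sup>+ g. ennreal (weight k g / total_weight k) \<partial>pi1)"
    by (rule nn_integral_cong) simp
  also have "\<dots> = ennreal (\<integral>g. weight k g / total_weight k \<partial>pi1)"
    using integrable_weight[OF k] total_weight_pos[OF k] weight_pos
    by (intro nn_integral_eq_integral) (auto simp: less_imp_le)
  also have "(\<integral>g. weight k g / total_weight k \<partial>pi1) = 1"
    using total_weight_pos[OF k] by (simp add: total_weight_def)
  finally show "emeasure (gibbs k) (space (gibbs k)) = 1" by simp
qed

lemma integral_exp_gibbs:
  assumes "k < T"
  shows "(\<integral>g. exp (- eta * Lh (Suc k) g) \<partial>gibbs k) = total_weight (Suc k) / total_weight k"
proof -
  have "(\<integral>g. exp (- eta * Lh (Suc k) g) \<partial>gibbs k)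
          = (\<integral>g. (weight k g / total_weight k) *\<^sub>R exp (- eta * Lh (Suc k) g) \<partial>pi1)"
    unfolding gibbs_def using assms total_weight_pos[of k] weight_pos measurable_loss[of "Suc k"]
    by (intro integral_density) (auto simp: less_imp_le)
  also have "\<dots> = total_weight (Suc k) / total_weight k"
    by (simp add: weight_Suc total_weight_def)
  finally show ?thesis .
qed

lemma density_gibbs_Suc:
  assumes k: "k < T"
  shows "density (gibbs k) (\<lambda>g. ennreal (exp (- eta * Lh (Suc k) g) * total_weight k / total_weight (Suc k)))
           = gibbs (Suc k)"
proof -
  have pos: "0 < total_weight k" "0 < total_weight (Suc k)"
    using total_weight_pos k by auto
  have "density (gibbs k) (\<lambda>g. ennreal (exp (- eta * Lh (Suc k) g) * total_weight k / total_weight (Suc k)))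
          = density pi1 (\<lambda>g. ennreal (weight k g / total_weight k)
              * ennreal (exp (- eta * Lh (Suc k) g) * total_weight k / total_weight (Suc k)))"
    unfolding gibbs_def using k measurable_loss[of "Suc k"] by (intro density_density_eq) auto
  also have "\<dots> = gibbs (Suc k)"
    unfolding gibbs_def
  proof (rule arg_cong[where f = "density pi1"], rule ext)
    fix g
    have "ennreal (weight k g / total_weight k)
            * ennreal (exp (- eta * Lh (Suc k) g) * total_weight k / total_weight (Suc k))
          = ennreal (weight k g / total_weight k
                     * (exp (- eta * Lh (Suc k) g) * total_weight k / total_weight (Suc k)))"
      using pos weight_pos[of k g]
      by (subst ennreal_mult[symmetric]) (auto intro!: divide_nonneg_pos mult_nonneg_nonneg less_imp_le)
    also have "\<dots> = ennreal (weight (Suc k) g / total_weight (Suc k))"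
      using pos by (simp add: weight_Suc)
    finally show "ennreal (weight k g / total_weight k)
            * ennreal (exp (- eta * Lh (Suc k) g) * total_weight k / total_weight (Suc k))
          = ennreal (weight (Suc k) g / total_weight (Suc k))" .
  qed
  finally show ?thesis .
qed

lemma ewa_seq_eq_gibbs: "k < T \<Longrightarrow> ewa_seq pi1 eta Lh k = gibbs k"
proof (induction k)
  case 0
  show ?case by (simp add: gibbs_def weight_0 total_weight_0 density_1)
next
  case (Suc k)
  then have k: "k < T" by simp
  have "ewa_seq pi1 eta Lh (Suc k)
          = density (gibbs k) (\<lambda>g. ennreal (exp (- eta * Lh (Suc k) g) / (total_weight (Suc k) / total_weight k)))"
    using Suc k by (simp only: ewa_seq.simps ewa_update_def integral_exp_gibbs)
  also have "\<dots> = density (gibbs k) (\<lambda>g. ennreal (exp (- eta * Lh (Suc k) g) * total_weight k / total_weight (Suc k)))"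
    by simp
  also have "\<dots> = gibbs (Suc k)"
    by (rule density_gibbs_Suc[OF k])
  finally show ?case .
qed

lemma total_weight_Suc_le:
  assumes k: "k < T"
  shows "total_weight (Suc k) \<le> total_weight k * exp (- eta * expected_loss (Suc k) + eta\<^sup>2 * C\<^sup>2 / 8)"
proof -
  interpret gibbs: prob_space "gibbs k" using k by (intro prob_space_gibbs) simp
  have sets_gibbs: "sets (gibbs k) = sets pi1" by (simp add: gibbs_def)
  have "Lh (Suc k) \<in> borel_measurable (gibbs k)"
    using measurable_loss[of "Suc k"] k by (simp add: measurable_cong_sets[OF sets_gibbs refl])
  then have "(\<integral>g. exp (- eta * Lh (Suc k) g) \<partial>gibbs k)
               \<le> exp (- eta * (\<integral>g. Lh (Suc k) g \<partial>gibbs k) + eta\<^sup>2 * C\<^sup>2 / 8)"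
    using loss_bounds[of "Suc k"] k eta_pos sets_eq_imp_space_eq[OF sets_gibbs]
    by (intro gibbs.integral_exp_le_Hoeffding) auto
  note Hoeffding = this
  have "total_weight (Suc k) = total_weight k * (\<integral>g. exp (- eta * Lh (Suc k) g) \<partial>gibbs k)"
    using integral_exp_gibbs[OF k] total_weight_pos[of k] k by simp
  also have "\<dots> \<le> total_weight k * exp (- eta * (\<integral>g. Lh (Suc k) g \<partial>gibbs k) + eta\<^sup>2 * C\<^sup>2 / 8)"
    using Hoeffding total_weight_pos[of k] k by (intro mult_left_mono) auto
  also have "(\<integral>g. Lh (Suc k) g \<partial>gibbs k) = expected_loss (Suc k)"
    using k by (simp add: expected_loss_def ewa_seq_eq_gibbs)
  finally show ?thesis .
qed

lemma total_weight_le: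
  "k \<le> T \<Longrightarrow> total_weight k \<le> exp (- eta * (\<Sum>t=1..k. expected_loss t) + k * (eta\<^sup>2 * C\<^sup>2 / 8))"
proof (induction k)
  case 0
  show ?case by (simp add: total_weight_0)
next
  case (Suc k)
  then have "total_weight (Suc k)
      \<le> exp (- eta * (\<Sum>t=1..k. expected_loss t) + k * (eta\<^sup>2 * C\<^sup>2 / 8))
        * exp (- eta * expected_loss (Suc k) + eta\<^sup>2 * C\<^sup>2 / 8)"
    by (intro order.trans[OF total_weight_Suc_le] mult_right_mono) auto
  also have "\<dots> = exp (- eta * (\<Sum>t=1..Suc k. expected_loss t) + Suc k * (eta\<^sup>2 * C\<^sup>2 / 8))"
    by (simp add: exp_add[symmetric] algebra_simps)
  finally show ?case .
qed

lemma integrable_cumulative_loss: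
  assumes "prob_space \<rho>" and sets_\<rho>: "sets \<rho> = sets pi1"
  shows "integrable \<rho> (\<lambda>g. \<Sum>t=1..T. Lh t g)"
proof -
  interpret \<rho>: prob_space \<rho> by fact
  show ?thesis
  proof (rule \<rho>.integrable_const_bound[where B = "T * C"])
    show "AE g in \<rho>. norm (\<Sum>t=1..T. Lh t g) \<le> T * C"
      using cumulative_loss_bounds[of T] sets_eq_imp_space_eq[OF sets_\<rho>] by (intro AE_I2) auto
    show "(\<lambda>g. \<Sum>t=1..T. Lh t g) \<in> borel_measurable \<rho>"
      using measurable_cumulative_loss[of T] by (simp add: measurable_cong_sets[OF sets_\<rho> refl])
  qed
qed

lemma total_weight_ge:
  assumes \<rho>: "prob_space \<rho>" and sets_\<rho>: "sets \<rho> = sets pi1"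
    and ac: "absolutely_continuous pi1 \<rho>"
    and int_entropy: "integrable \<rho> (entropy_density (exp 1) pi1 \<rho>)"
  shows "exp (- eta * (\<integral>g. (\<Sum>t=1..T. Lh t g) \<partial>\<rho>) - KL_divergence (exp 1) pi1 \<rho>) \<le> total_weight T"
proof -
  have "(\<lambda>g. \<Sum>t=1..T. Lh t g) \<in> borel_measurable pi1" by (rule measurable_cumulative_loss) simp
  then have meas: "(\<lambda>g. - eta * (\<Sum>t=1..T. Lh t g)) \<in> borel_measurable pi1" by measurable
  have int: "integrable \<rho> (\<lambda>g. - eta * (\<Sum>t=1..T. Lh t g))"
    using integrable_cumulative_loss[OF \<rho> sets_\<rho>] by simp
  have int_exp: "integrable pi1 (\<lambda>g. exp (- eta * (\<Sum>t=1..T. Lh t g)))"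
    using integrable_weight[of T] by (simp add: weight_def[abs_def])
  have "exp ((\<integral>g. - eta * (\<Sum>t=1..T. Lh t g) \<partial>\<rho>) - KL_divergence (exp 1) pi1 \<rho>)
          \<le> (\<integral>g. exp (- eta * (\<Sum>t=1..T. Lh t g)) \<partial>pi1)"
    by (rule Donsker_Varadhan_inequality[OF prob_space_imp_sigma_finite[OF prob_space_prior]
          \<rho> sets_\<rho> ac int_entropy meas int int_exp])
  then show ?thesis by (simp add: total_weight_def weight_def)
qed

lemma ewa_regret:
  assumes "prob_space \<rho>" "sets \<rho> = sets pi1" "absolutely_continuous pi1 \<rho>"
    "integrable \<rho> (entropy_density (exp 1) pi1 \<rho>)"
  shows "(\<Sum>t=1..T. expected_loss t)
           \<le> (\<integral>g. (\<Sum>t=1..T. Lh t g) \<partial>\<rho>) + T * (eta * C\<^sup>2 / 8) + KL_divergence (exp 1) pi1 \<rho> / eta"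
proof -
  have "exp (- eta * (\<integral>g. (\<Sum>t=1..T. Lh t g) \<partial>\<rho>) - KL_divergence (exp 1) pi1 \<rho>)
          \<le> exp (- eta * (\<Sum>t=1..T. expected_loss t) + T * (eta\<^sup>2 * C\<^sup>2 / 8))"
    using total_weight_ge[OF assms] total_weight_le[of T] by linarith
  then have "eta * (\<Sum>t=1..T. expected_loss t)
               \<le> eta * ((\<integral>g. (\<Sum>t=1..T. Lh t g) \<partial>\<rho>) + T * (eta * C\<^sup>2 / 8) + KL_divergence (exp 1) pi1 \<rho> / eta)"
    using eta_pos by (simp add: algebra_simps power2_eq_square)
  then show ?thesis using eta_pos by simp
qed

lemma ewa_oracle_inequality:
  assumes T: "T > 0" and Psi_meas: "Psi \<in> borel_measurable pi1"
    and Psi_le: "\<And>g. g \<in> space pi1 \<Longrightarrow> Psi g \<le> K"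
    and Psi_ge: "\<And>g. g \<in> space pi1 \<Longrightarrow> (1 / real T) * (\<Sum>t=1..T. Lh t g) \<le> Psi g"
  shows "ereal ((1 / real T) * (\<Sum>t=1..T. expected_loss t))
           \<le> (INF \<rho>\<in>{\<rho>. prob_space \<rho> \<and> sets \<rho> = sets pi1}.
                ereal (\<integral>g. Psi g \<partial>\<rho>) + ereal (eta * C\<^sup>2 / 8) + kl_div \<rho> pi1 / ereal (eta * real T))"
proof (rule INF_greatest, clarify)
  fix \<rho> assume \<rho>: "prob_space \<rho>" and sets_\<rho>: "sets \<rho> = sets pi1"
  interpret \<rho>: prob_space \<rho> by (rule \<rho>)
  show "ereal ((1 / real T) * (\<Sum>t=1..T. expected_loss t))
          \<le> ereal (\<integral>g. Psi g \<partial>\<rho>) + ereal (eta * C\<^sup>2 / 8) + kl_div \<rho> pi1 / ereal (eta * real T)"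
  proof (cases "absolutely_continuous pi1 \<rho> \<and> integrable \<rho> (entropy_density (exp 1) pi1 \<rho>)")
    case False
    then have "kl_div \<rho> pi1 = \<infinity>" by (simp add: kl_div_def)
    then show ?thesis using eta_pos T by simp
  next
    case True
    define KL where "KL = KL_divergence (exp 1) pi1 \<rho>"
    have space_\<rho>: "space \<rho> = space pi1" using sets_\<rho> by (rule sets_eq_imp_space_eq)
    have Psi_bounds: "Psi g \<in> {0..K}" if "g \<in> space pi1" for g
      using cumulative_loss_bounds[of T g] Psi_ge[of g] Psi_le[of g] that T
      by (auto intro: order.trans[rotated])
    have int_Psi: "integrable \<rho> Psi"
      using Psi_meas Psi_bounds space_\<rho>
      by (intro \<rho>.integrable_const_bound[where B = K]) (auto simp: measurable_cong_sets[OF sets_\<rho> refl])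
    have "(1 / real T) * (\<Sum>t=1..T. expected_loss t)
            \<le> (1 / real T) * ((\<integral>g. (\<Sum>t=1..T. Lh t g) \<partial>\<rho>) + T * (eta * C\<^sup>2 / 8) + KL / eta)"
      using ewa_regret[OF \<rho> sets_\<rho>] True by (intro mult_left_mono) (auto simp: KL_def)
    also have "\<dots> = (\<integral>g. (1 / real T) * (\<Sum>t=1..T. Lh t g) \<partial>\<rho>) + eta * C\<^sup>2 / 8 + KL / (eta * T)"
      using T eta_pos by (simp add: field_simps)
    also have "\<dots> \<le> (\<integral>g. Psi g \<partial>\<rho>) + eta * C\<^sup>2 / 8 + KL / (eta * T)"
      using integrable_cumulative_loss[OF \<rho> sets_\<rho>] int_Psi Psi_ge space_\<rho>
      by (simp only: add_le_cancel_right, intro integral_mono) auto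
    finally show ?thesis using True eta_pos T by (simp add: kl_div_def KL_def)
  qed
qed


lemma ewa_oracle_inequality_per_task:
  assumes T: "T > 0"
    and R_meas: "\<And>t. R t \<in> borel_measurable pi1"
    and R_bounds: "\<And>t g. t \<in> {1..T} \<Longrightarrow> g \<in> space pi1 \<Longrightarrow> R t g \<in> {0..C}"
    and loss_le: "\<And>t g. t \<in> {1..T} \<Longrightarrow> g \<in> space pi1 \<Longrightarrow> Lh t g \<le> R t g + r t"
  shows "ereal ((1 / real T) * (\<Sum>t=1..T. expected_loss t))
           \<le> (INF \<rho>\<in>{\<rho>. prob_space \<rho> \<and> sets \<rho> = sets pi1}.
                ereal (\<integral>g. (1 / real T) * (\<Sum>t=1..T. R t g) + (1 / real T) * (\<Sum>t=1..T. r t) \<partial>\<rho>)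
                + ereal (eta * C\<^sup>2 / 8) + kl_div \<rho> pi1 / ereal (eta * real T))"
proof (rule ewa_oracle_inequality[OF T, where K = "C + (1 / real T) * (\<Sum>t=1..T. r t)"])
  show "(\<lambda>g. (1 / real T) * (\<Sum>t=1..T. R t g) + (1 / real T) * (\<Sum>t=1..T. r t)) \<in> borel_measurable pi1"
    using R_meas by measurable
next
  fix g assume g: "g \<in> space pi1"
  have "(1 / real T) * (\<Sum>t=1..T. R t g) \<in> {0..C}"
    using R_bounds g T by (intro average_atLeastAtMost) auto
  then show "(1 / real T) * (\<Sum>t=1..T. R t g) + (1 / real T) * (\<Sum>t=1..T. r t)
               \<le> C + (1 / real T) * (\<Sum>t=1..T. r t)" by simp
  have "(\<Sum>t=1..T. Lh t g) \<le> (\<Sum>t=1..T. R t g + r t)"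
    using loss_le g by (intro sum_mono) auto
  then show "(1 / real T) * (\<Sum>t=1..T. Lh t g)
               \<le> (1 / real T) * (\<Sum>t=1..T. R t g) + (1 / real T) * (\<Sum>t=1..T. r t)"
    using T by (simp add: sum.distrib field_simps)
qed
end

lemma oga_avg_loss_atLeastAtMost:
  assumes "n > 0" and "\<forall>x y th. loss (h th (g x)) y \<in> {0..C}"
  shows "oga_avg_loss loss h sgr z g D n \<in> {0..C}"
  unfolding oga_avg_loss_def using assms by (intro average_atLeastAtMost) auto

lemma INF_cball_avg_loss_atLeastAtMost:
  assumes "n > 0" and "B \<ge> 0" and "\<forall>x y th. loss (h th (g x)) y \<in> {0..C}"
  shows "(INF u\<in>cball (0 :: real^'p) B. (1 / real n) * (\<Sum>i=1..n. loss (h u (g (fst (D i)))) (snd (D i))))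
           \<in> {0..C}"
  using assms by (intro INF_atLeastAtMost average_atLeastAtMost) auto

lemma borel_measurable_INF_cball_avg_loss:
  fixes h :: "real^'p \<Rightarrow> 'z \<Rightarrow> real"
  assumes meas_loss: "\<forall>x y th. (\<lambda>g. loss (h th (g x)) y) \<in> borel_measurable M"
    and lipschitz: "\<forall>g\<in>space M. \<forall>x y. L-lipschitz_on UNIV (\<lambda>th. loss (h th (g x)) y)"
    and nonneg: "\<forall>g\<in>space M. \<forall>x y th. 0 \<le> loss (h th (g x)) y"
    and B: "B > 0"
  shows "(\<lambda>g. INF u\<in>cball 0 B. (1 / real n) * (\<Sum>i=1..n. loss (h u (g (fst (D i)))) (snd (D i))))
           \<in> borel_measurable M"
proof (rule borel_measurable_INF_cball[OF _ _ _ B])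
  fix u :: "real^'p"
  show "(\<lambda>g. (1 / real n) * (\<Sum>i=1..n. loss (h u (g (fst (D i)))) (snd (D i)))) \<in> borel_measurable M"
    using meas_loss by (intro borel_measurable_times borel_measurable_const borel_measurable_sum) auto
next
  fix g assume g: "g \<in> space M"
  show "continuous_on UNIV (\<lambda>u. (1 / real n) * (\<Sum>i=1..n. loss (h u (g (fst (D i)))) (snd (D i))))"
    using lipschitz g by (intro continuous_on_mult_left continuous_on_sum) (auto intro: lipschitz_on_continuous_on)
  show "bdd_below ((\<lambda>u. (1 / real n) * (\<Sum>i=1..n. loss (h u (g (fst (D i)))) (snd (D i)))) ` cball 0 B)"
    using nonneg g by (intro bdd_belowI[of _ 0]) (auto intro!: divide_nonneg_nonneg sum_nonneg)
qed

theorem corollary1: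
  fixes M :: "('x \<Rightarrow> 'z) measure"
    and pi1 :: "('x \<Rightarrow> 'z) measure"
    and h :: "real^'p \<Rightarrow> 'z \<Rightarrow> real"
    and loss :: "real \<Rightarrow> 'y \<Rightarrow> real"
    and sgr :: "('x \<Rightarrow> 'z) \<Rightarrow> 'x \<Rightarrow> 'y \<Rightarrow> real^'p \<Rightarrow> real^'p"
    and B L C eta :: real
    and T :: nat
    and m :: "nat \<Rightarrow> nat"
    and S :: "nat \<Rightarrow> nat \<Rightarrow> 'x \<times> 'y"
  assumes prior: "prob_space pi1" "sets pi1 = sets M"
    and B_pos: "B > 0" and L_pos: "L > 0" and eta_pos: "eta > 0"
    and T_pos: "T > 0"
    and m_pos: "\<forall>t\<in>{1..T}. m t > 0"
    and convex: "\<forall>g\<in>space M. \<forall>x y. convex_on UNIV (\<lambda>th. loss (h th (g x)) y)"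
    and lipschitz: "\<forall>g\<in>space M. \<forall>x y. L-lipschitz_on UNIV (\<lambda>th. loss (h th (g x)) y)"
    and bounded: "\<forall>g\<in>space M. \<forall>x y th. 0 \<le> loss (h th (g x)) y \<and> loss (h th (g x)) y \<le> C"
    and subgrad: "\<forall>g\<in>space M. \<forall>x y th th'.
                    loss (h th' (g x)) y \<ge> loss (h th (g x)) y + inner (sgr g x y th) (th' - th)"
    and meas_loss: "\<forall>x y th. (\<lambda>g. loss (h th (g x)) y) \<in> borel_measurable M"
    and meas_Lhat: "\<forall>t\<in>{1..T}. task_loss loss h sgr B L S m t \<in> borel_measurable M"
  shows "ereal ((1 / real T) * (\<Sum>t=1..T.
            \<integral>g. task_loss loss h sgr B L S m t g
              \<partial>(ewa_seq pi1 eta (task_loss loss h sgr B L S m) (t - 1))))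
         \<le> (INF rho \<in> {rho. prob_space rho \<and> sets rho = sets M}.
              ereal (\<integral>g. (1 / real T) * (\<Sum>t=1..T.
                        (INF f \<in> h ` {th. norm th \<le> B}.
                           (1 / real (m t)) * (\<Sum>i=1..m t. loss (f (g (fst (S t i)))) (snd (S t i)))))
                      + B * L / real T * (\<Sum>t=1..T. sqrt (2 / real (m t))) \<partial>rho)
              + ereal (eta * C\<^sup>2 / 8)
              + kl_div rho pi1 / ereal (eta * real T))"
proof -
  define Lh where "Lh = task_loss loss h sgr B L S m"
  define R where "R t g = (INF u\<in>cball 0 B.
      (1 / real (m t)) * (\<Sum>i=1..m t. loss (h u (g (fst (S t i)))) (snd (S t i))))" for t g
  have space_eq: "space pi1 = space M" using prior(2) by (rule sets_eq_imp_space_eq)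
  interpret ewa_losses pi1 eta C T Lh
  proof (rule ewa_losses.intro)
    show "\<And>t. t \<in> {1..T} \<Longrightarrow> Lh t \<in> borel_measurable pi1"
      using meas_Lhat by (simp add: Lh_def measurable_cong_sets[OF prior(2) refl])
    show "\<And>t g. t \<in> {1..T} \<Longrightarrow> g \<in> space pi1 \<Longrightarrow> Lh t g \<in> {0..C}"
      unfolding Lh_def task_loss_def space_eq
      by (rule oga_avg_loss_atLeastAtMost) (use m_pos bounded in auto)
  qed (use prior(1) eta_pos in simp_all)
  have "ereal ((1 / real T) * (\<Sum>t=1..T. expected_loss t))
          \<le> (INF \<rho>\<in>{\<rho>. prob_space \<rho> \<and> sets \<rho> = sets pi1}.
                ereal (\<integral>g. (1 / real T) * (\<Sum>t=1..T. R t g)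
                           + (1 / real T) * (\<Sum>t=1..T. B * L * sqrt (2 / real (m t))) \<partial>\<rho>)
                + ereal (eta * C\<^sup>2 / 8) + kl_div \<rho> pi1 / ereal (eta * real T))"
  proof (rule ewa_oracle_inequality_per_task[OF T_pos])
    show "R t \<in> borel_measurable pi1" for t
      unfolding R_def measurable_cong_sets[OF prior(2) refl]
      by (rule borel_measurable_INF_cball_avg_loss) (use meas_loss lipschitz bounded B_pos in auto)
    show "R t g \<in> {0..C}" if "t \<in> {1..T}" "g \<in> space pi1" for t g
      unfolding R_def by (rule INF_cball_avg_loss_atLeastAtMost) (use that m_pos bounded B_pos space_eq in auto)
    show "Lh t g \<le> R t g + B * L * sqrt (2 / real (m t))" if "t \<in> {1..T}" "g \<in> space pi1" for t g
      unfolding Lh_def task_loss_def R_def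
      by (rule oga_avg_loss_le_INF_cball) (use that m_pos subgrad lipschitz B_pos L_pos space_eq in auto)
  qed
  moreover have "(1 / real T) * (\<Sum>t=1..T. B * L * sqrt (2 / real (m t)))
                   = B * L / real T * (\<Sum>t=1..T. sqrt (2 / real (m t)))"
    by (simp add: sum_distrib_left)
  moreover have "cball 0 B = {th :: real^'p. norm th \<le> B}" by auto
  ultimately show ?thesis
    unfolding expected_loss_def by (simp only:) (simp add: Lh_def R_def prior(2) image_image)
qed

end
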